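(* ($q$-Genocchi triangle) Let $q$ be a nonzero real number with $q\neq-1$. Define numbers $b(m,k)=b(m,k,q)$ as follows: $b(0,1)=1$; $b(2n+1,0)=0$ for all $n\ge0$; $b(2n,n+1)=0$ for all $n\ge1$; for $n\ge0$ and $1\le k\le n+1$, $$b(2n+1,k)=q^{2k-2}b(2n+1,k-1)+(1+q^{2k-1})b(2n,k);$$ and for $n\ge1$ and $1\le k\le n$, $$b(2n,k)=q^{1-2k}\big(b(2n,k+1)+(1+q^{2k})b(2n-1,k)\big).$$ (In particular $b(1,1)=1+q$.) Then for every $n\ge1$, $$b(2n-1,n)=\lambda\big((-1)^{n-1}U_{2n-1}(1,s,q)\big)=(-q;q)_{2n-1}\,G_{2n}(q).$$
   Context: $U_{-1}=0$, $U_0=1$, $U_n(x,s,q)=(1+q^{n})x\,U_{n-1}(x,s,q)+q^{n-1}s\,U_{n-2}(x,s,q)$ for $n\ge1$. Since $U_{2n}(1,s,q)$ is a polynomial in $s$ of degree $n$, the polynomials $U_{2n}(1,s,q)$, $n\ge0$, form a basis of the polynomials in $s$; $\lambda$ is the linear functional on polynomials in $s$ with $\lambda(U_{2n}(1,s,q))=[n=0]$. Notation: $[m]=1+q+\cdots+q^{m-1}$, $[m]!=[1]\cdots[m]$; $(-q;q)_m=(1+q)(1+q^2)\cdots(1+q^m)$. With $e(z)=\sum_{m\ge0}z^m/[m]!$, the $q$-Genocchi numbers $G_{2m}(q)$, $m\ge1$, are defined by $z\frac{e(z)-e(-z)}{e(z)+e(-z)}=\sum_{m\ge1}\frac{(-1)^{m-1}G_{2m}(q)(-q;q)_{2m-1}}{[2m]!}z^{2m}$.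 *)

theory Defs
  imports "HOL-Computational_Algebra.Polynomial" "HOL-Computational_Algebra.Formal_Power_Series"
begin

text \<open>U_n(x,s,q) as a polynomial in s (real coefficients), for given reals q and x.
  Index shift: Upol q x n = U_n, with U_{-1} = 0 built into the case n = 1.\<close>
fun Upol :: "real \<Rightarrow> real \<Rightarrow> nat \<Rightarrow> real poly" where
  "Upol q x 0 = 1"
| "Upol q x (Suc 0) = smult ((1 + q) * x) 1"
| "Upol q x (Suc (Suc n)) =
     smult ((1 + q ^ (n + 2)) * x) (Upol q x (Suc n)) + smult (q ^ (n + 1)) ([:0, 1:] * Upol q x n)"

definition qlambda :: "real \<Rightarrow> real poly \<Rightarrow> real" where
  "qlambda q = (SOME L. (\<forall>p r. L (p + r) = L p + L r) \<and> (\<forall>c p. L (smult c p) = c * L p)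
                 \<and> (\<forall>n. L (Upol q 1 (2 * n)) = (if n = 0 then 1 else 0)))"

definition qint :: "real \<Rightarrow> nat \<Rightarrow> real" where
  "qint q m = (\<Sum>i<m. q ^ i)"

definition qfact :: "real \<Rightarrow> nat \<Rightarrow> real" where
  "qfact q m = (\<Prod>i=1..m. qint q i)"

definition qpoch_neg :: "real \<Rightarrow> nat \<Rightarrow> real" where
  "qpoch_neg q m = (\<Prod>i=1..m. 1 + q ^ i)"

definition qexp :: "real \<Rightarrow> real fps" where
  "qexp q = Abs_fps (\<lambda>m. 1 / qfact q m)"

definition qexp_neg :: "real \<Rightarrow> real fps" where
  "qexp_neg q = Abs_fps (\<lambda>m. (-1) ^ m / qfact q m)"

text \<open>q-Genocchi numbers: from z (e(z)-e(-z))/(e(z)+e(-z)) = sum_{m>=1} (-1)^(m-1) G_{2m}(q) (-q;q)_{2m-1} z^{2m} / [2m]!.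
  qGenocchi q m stands for G_{2m}(q).\<close>
definition qGenocchi :: "real \<Rightarrow> nat \<Rightarrow> real" where
  "qGenocchi q m =
     (-1) ^ (m - 1) * qfact q (2 * m) / qpoch_neg q (2 * m - 1)
     * fps_nth (fps_X * (qexp q - qexp_neg q) * inverse (qexp q + qexp_neg q)) (2 * m)"

end

theory Submission
  imports Defs
begin

(*
  Under lambda, the entry b(2n,k) is the image of (-1)^n s^(n+1-k) U_(2k-2) and b(2n+1,k) that of
  (-1)^n s^(n+1-k) U_(2k-1): the recurrences defining b are the three-term recurrence of U, and the
  boundary values come from lambda(U_(2n)) = [n = 0].  The diagonal entry is then lambda((-1)^(n-1) U_(2n-1)).

  For the Genocchi numbers, the recurrence of U turns A(z) = sum_n (-1)^n U_(n-1) z^n / [n]! into a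
  q-difference equation under which A(z) e(z) has vanishing even coefficients.  Applying lambda to these
  coefficients gives a unitriangular linear system for lambda(U_(2k-1)) / [2k]!.  The odd coefficients of
  T(z) = (e(z) - e(-z)) / (e(z) + e(-z)) solve the same system, as one sees by comparing odd coefficients
  in e(z) - e(-z) = T(z) (e(z) + e(-z)).
*)

unbundle fps_syntax

lemma qint_geometric: "(q - 1) * qint q n = q ^ n - 1"
  by (induction n) (auto simp: qint_def algebra_simps)

lemma qint_nonzero:
  fixes q :: real
  assumes "q \<noteq> -1" "n \<noteq> 0"
  shows "qint q n \<noteq> 0"
proof
  assume "qint q n = 0"
  show False
  proof (cases "q = 1")
    case True
    with \<open>qint q n = 0\<close> \<open>n \<noteq> 0\<close> show False by (simp add: qint_def)
  next
    case False
    with \<open>qint q n = 0\<close> have "q ^ n = 1" using qint_geometric[of q n] by simp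
    then have "\<bar>q\<bar> = 1" using \<open>n \<noteq> 0\<close> power_eq_1_iff[of q n] by simp
    with False \<open>q \<noteq> -1\<close> show False by (simp add: abs_if split: if_splits)
  qed
qed

lemma qfact_0 [simp]: "qfact q 0 = 1"
  by (simp add: qfact_def)

lemma qfact_Suc: "qfact q (Suc n) = qfact q n * qint q (Suc n)"
  by (simp add: qfact_def prod.nat_ivl_Suc' mult.commute)

lemma qfact_nonzero:
  fixes q :: real
  assumes "q \<noteq> -1"
  shows "qfact q n \<noteq> 0"
  using qint_nonzero[OF assms] by (induction n) (simp_all add: qfact_Suc)

lemma qpoch_neg_nonzero:
  fixes q :: real
  assumes "q \<noteq> -1"
  shows "qpoch_neg q n \<noteq> 0"
proof
  assume "qpoch_neg q n = 0"
  then obtain i where "1 \<le> i" "q ^ i = -1"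
    unfolding qpoch_neg_def by (auto simp: add_eq_0_iff)
  then have "q ^ (2 * i) = 1" "2 * i \<noteq> 0"
    by (simp_all add: power_mult power_mult_distrib[symmetric] mult.commute[of 2])
  then have "\<bar>q\<bar> = 1" using power_eq_1_iff[of q "2 * i"] by simp
  with \<open>q ^ i = -1\<close> assms show False by (auto simp: abs_if split: if_splits)
qed

lemma degree_Upol_le: "degree (Upol q x n) \<le> n div 2"
proof (induction q x n rule: Upol.induct)
  case (3 q x n)
  have "degree (smult ((1 + q ^ (n + 2)) * x) (Upol q x (Suc n))) \<le> Suc (Suc n) div 2"
    using degree_smult_le[of _ "Upol q x (Suc n)"] 3(1) by (meson div_le_mono le_Suc_eq order_trans)
  moreover have "degree (smult (q ^ (n + 1)) ([:0, 1:] * Upol q x n)) \<le> Suc (Suc n) div 2"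
    using degree_smult_le[of _ "pCons 0 (Upol q x n)"] degree_pCons_le[of 0 "Upol q x n"] 3(2)
    by simp
  ultimately show ?case
    by (simp only: Upol.simps) (rule degree_add_le)
qed auto

lemma coeff_Upol_even_nonzero:
  assumes "q \<noteq> 0"
  shows "coeff (Upol q 1 (2 * n)) n \<noteq> 0"
proof (induction n)
  case (Suc n)
  have "coeff (Upol q 1 (Suc (2 * n))) (Suc n) = 0"
    using degree_Upol_le[of q 1 "Suc (2 * n)"] by (intro coeff_eq_0) auto
  with Suc assms show ?case by simp
qed simp

section \<open>The functional lambda\<close>

text \<open>If degree (P n) = n for all n, the P n form a basis. The functional taking the coordinate
  along P 0 is determined by its moments, its values on the monomials s^i, which are solved for
  recursively from the conditions on P 1, P 2, \<dots>\<close>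
function dual_moment :: "(nat \<Rightarrow> 'a::field poly) \<Rightarrow> nat \<Rightarrow> 'a" where
  "dual_moment P n =
     (if n = 0 then 1 / coeff (P 0) 0
      else - (\<Sum>i<n. coeff (P n) i * dual_moment P i) / coeff (P n) n)"
  by auto
termination by (relation "measure snd") auto

declare dual_moment.simps [simp del]

definition dual_functional :: "(nat \<Rightarrow> 'a::field poly) \<Rightarrow> 'a poly \<Rightarrow> 'a" where
  "dual_functional P p = (\<Sum>i\<le>degree p. coeff p i * dual_moment P i)"

lemma dual_functional_eq_sum:
  "degree p \<le> N \<Longrightarrow> dual_functional P p = (\<Sum>i\<le>N. coeff p i * dual_moment P i)"
  unfolding dual_functional_def by (rule sum.mono_neutral_left) (auto simp: coeff_eq_0)

lemma dual_functional_add: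
  "dual_functional P (p + r) = dual_functional P p + dual_functional P r"
proof -
  define N where "N = max (degree p) (degree r)"
  have "degree (p + r) \<le> N" "degree p \<le> N" "degree r \<le> N"
    unfolding N_def by (auto intro: degree_add_le)
  then show ?thesis
    by (simp add: dual_functional_eq_sum[of _ N] algebra_simps sum.distrib)
qed

lemma dual_functional_smult: "dual_functional P (smult c p) = c * dual_functional P p"
  by (simp add: dual_functional_eq_sum[OF degree_smult_le] dual_functional_def
      sum_distrib_left mult.assoc)

lemma dual_functional_basis:
  assumes "\<And>n. degree (P n) \<le> n" and "\<And>n. coeff (P n) n \<noteq> 0"
  shows "dual_functional P (P n) = (if n = 0 then 1 else 0)"
proof -
  have "dual_functional P (P n) = (\<Sum>i<n. coeff (P n) i * dual_moment P i) + coeff (P n) n * dual_moment P n"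
    by (simp add: dual_functional_eq_sum[OF assms(1)] lessThan_Suc_atMost[symmetric])
  also have "\<dots> = (if n = 0 then 1 else 0)"
    using assms(2)[of n] assms(2)[of 0] by (subst (2) dual_moment.simps) auto
  finally show ?thesis .
qed

lemma qlambda_characterization:
  assumes "q \<noteq> 0"
  shows "(\<forall>p r. qlambda q (p + r) = qlambda q p + qlambda q r)
    \<and> (\<forall>c p. qlambda q (smult c p) = c * qlambda q p)
    \<and> (\<forall>n. qlambda q (Upol q 1 (2 * n)) = (if n = 0 then 1 else 0))"
proof -
  let ?P = "\<lambda>n. Upol q 1 (2 * n)"
  have basis: "dual_functional ?P (?P n) = (if n = 0 then 1 else 0)" for n
  proof (rule dual_functional_basis)
    show "degree (?P n) \<le> n" for n
      using degree_Upol_le[of q 1 "2 * n"] by simp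
  qed (rule coeff_Upol_even_nonzero[OF assms])
  have "\<exists>L. (\<forall>p r. L (p + r) = L p + L r) \<and> (\<forall>c p. L (smult c p) = c * L p)
      \<and> (\<forall>n. L (?P n) = (if n = 0 then 1 else 0))"
    using dual_functional_add dual_functional_smult basis by blast
  then show ?thesis
    unfolding qlambda_def by (rule someI_ex)
qed

lemma qlambda_add: "q \<noteq> 0 \<Longrightarrow> qlambda q (p + r) = qlambda q p + qlambda q r"
  using qlambda_characterization by blast

lemma qlambda_smult: "q \<noteq> 0 \<Longrightarrow> qlambda q (smult c p) = c * qlambda q p"
  using qlambda_characterization by blast

lemma qlambda_Upol_even:
  "q \<noteq> 0 \<Longrightarrow> qlambda q (Upol q 1 (2 * n)) = (if n = 0 then 1 else 0)"
  using qlambda_characterization by blast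

lemma qlambda_0: "q \<noteq> 0 \<Longrightarrow> qlambda q 0 = 0"
  using qlambda_smult[of q 0 0] by simp

lemma qlambda_sum:
  "q \<noteq> 0 \<Longrightarrow> qlambda q (\<Sum>i\<in>I. f i) = (\<Sum>i\<in>I. qlambda q (f i))"
  by (induction I rule: infinite_finite_induct) (simp_all add: qlambda_0 qlambda_add)

section \<open>The triangle\<close>

text \<open>Ushift q n is U_(n-1)(1,s,q); the shift puts U_(-1) = 0 into the sequence.\<close>
definition Ushift :: "real \<Rightarrow> nat \<Rightarrow> real poly" where
  "Ushift q n = (case n of 0 \<Rightarrow> 0 | Suc m \<Rightarrow> Upol q 1 m)"

lemma Ushift_0 [simp]: "Ushift q 0 = 0"
  and Ushift_Suc [simp]: "Ushift q (Suc n) = Upol q 1 n"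
  by (simp_all add: Ushift_def)

lemma Ushift_rec:
  "Ushift q (Suc (Suc n)) =
     smult (1 + q ^ Suc n) (Ushift q (Suc n)) + smult (q ^ n) ([:0, 1:] * Ushift q n)"
  by (cases n) simp_all

definition triangle_even :: "real \<Rightarrow> nat \<Rightarrow> nat \<Rightarrow> real poly" where
  "triangle_even q n k = smult ((-1) ^ n) ([:0, 1:] ^ (n + 1 - k) * Ushift q (2 * k - 1))"

definition triangle_odd :: "real \<Rightarrow> nat \<Rightarrow> nat \<Rightarrow> real poly" where
  "triangle_odd q n k = smult ((-1) ^ n) ([:0, 1:] ^ (n + 1 - k) * Ushift q (2 * k))"

lemma triangle_odd_rec:
  assumes "k \<le> n"
  shows "triangle_odd q n (Suc k) =
    smult (q ^ (2 * k)) (triangle_odd q n k) + smult (1 + q ^ (2 * k + 1)) (triangle_even q n (Suc k))"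
proof -
  obtain m where "n + 1 - k = Suc m" "n + 1 - Suc k = m"
    using assms by (metis Suc_diff_le Suc_eq_plus1 diff_Suc_Suc)
  moreover have "2 * Suc k = Suc (Suc (2 * k))" "2 * Suc k - 1 = Suc (2 * k)"
    by simp_all
  ultimately show ?thesis
    unfolding triangle_odd_def triangle_even_def
    by (intro poly_ext) (simp add: Ushift_rec algebra_simps del: Ushift_Suc)
qed

lemma triangle_even_rec:
  assumes "1 \<le> k" "k \<le> n + 1"
  shows "smult (q ^ (2 * k - 1)) (triangle_even q (Suc n) k) =
    triangle_even q (Suc n) (Suc k) + smult (1 + q ^ (2 * k)) (triangle_odd q n k)"
proof -
  obtain j where "k = Suc j"
    using assms by (cases k) auto
  moreover obtain m where "Suc n + 1 - k = Suc m" "Suc n + 1 - Suc k = m" "n + 1 - k = m"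
    using assms by (metis Suc_diff_le Suc_eq_plus1 diff_Suc_Suc)
  moreover have "2 * Suc (Suc j) - 1 = Suc (Suc (Suc (2 * j)))" "2 * Suc j - 1 = Suc (2 * j)"
    "2 * Suc j = Suc (Suc (2 * j))"
    by simp_all
  ultimately show ?thesis
    unfolding triangle_odd_def triangle_even_def
    by (intro poly_ext) (simp add: Ushift_rec algebra_simps del: Ushift_Suc)
qed

locale q_genocchi_triangle =
  fixes q :: real and b :: "nat \<Rightarrow> nat \<Rightarrow> real"
  assumes q_nonzero: "q \<noteq> 0"
    and b_0_1: "b 0 1 = 1"
    and b_odd_0: "b (2 * n + 1) 0 = 0"
    and b_even_top: "n \<ge> 1 \<Longrightarrow> b (2 * n) (n + 1) = 0"
    and b_odd: "1 \<le> k \<Longrightarrow> k \<le> n + 1 \<Longrightarrow>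
      b (2 * n + 1) k = q ^ (2 * k - 2) * b (2 * n + 1) (k - 1) + (1 + q ^ (2 * k - 1)) * b (2 * n) k"
    and b_even: "n \<ge> 1 \<Longrightarrow> 1 \<le> k \<Longrightarrow> k \<le> n \<Longrightarrow>
      b (2 * n) k = q powi (1 - 2 * int k) * (b (2 * n) (k + 1) + (1 + q ^ (2 * k)) * b (2 * n - 1) k)"
begin

lemma b_odd_row:
  assumes even_row: "\<And>k. 1 \<le> k \<Longrightarrow> k \<le> n + 1 \<Longrightarrow> b (2 * n) k = qlambda q (triangle_even q n k)"
  shows "k \<le> n + 1 \<Longrightarrow> b (2 * n + 1) k = qlambda q (triangle_odd q n k)"
proof (induction k)
  case 0
  show ?case
    using b_odd_0 qlambda_0[OF q_nonzero] by (simp add: triangle_odd_def)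
next
  case (Suc k)
  have "b (2 * n + 1) (Suc k) = q ^ (2 * k) * b (2 * n + 1) k + (1 + q ^ (2 * k + 1)) * b (2 * n) (Suc k)"
    using b_odd[of "Suc k" n] Suc.prems by simp
  also have "\<dots> = q ^ (2 * k) * qlambda q (triangle_odd q n k)
      + (1 + q ^ (2 * k + 1)) * qlambda q (triangle_even q n (Suc k))"
    using Suc even_row by simp
  also have "\<dots> = qlambda q (triangle_odd q n (Suc k))"
    using Suc.prems by (simp add: triangle_odd_rec qlambda_add qlambda_smult q_nonzero)
  finally show ?case .
qed

lemma b_even_row:
  assumes odd_row: "\<And>k. k \<le> n + 1 \<Longrightarrow> b (2 * n + 1) k = qlambda q (triangle_odd q n k)"
    and "1 \<le> k" "k \<le> n + 2"
  shows "b (2 * Suc n) k = qlambda q (triangle_even q (Suc n) k)"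
  using \<open>k \<le> n + 2\<close>
proof (induction k rule: inc_induct)
  case base
  have top: "triangle_even q (Suc n) (n + 2) = smult ((-1) ^ Suc n) (Upol q 1 (2 * Suc n))"
    by (simp add: triangle_even_def del: Upol.simps)
  have "qlambda q (triangle_even q (Suc n) (n + 2)) = 0"
    unfolding top qlambda_smult[OF q_nonzero] qlambda_Upol_even[OF q_nonzero] by simp
  then show ?case
    using b_even_top[of "Suc n"] by simp
next
  case (step i)
  then obtain j where i: "i = Suc j" "j \<le> n"
    using \<open>1 \<le> k\<close> by (cases i) auto
  have "b (2 * Suc n) i =
      q powi (1 - 2 * int i) * (b (2 * Suc n) (Suc i) + (1 + q ^ (2 * i)) * b (2 * n + 1) i)"
    using b_even[of "Suc n" i] i by simp
  also have "\<dots> = q powi (1 - 2 * int i) * qlambda q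
      (triangle_even q (Suc n) (Suc i) + smult (1 + q ^ (2 * i)) (triangle_odd q n i))"
    using step.IH odd_row i by (simp add: qlambda_add qlambda_smult q_nonzero)
  also have "\<dots> = q powi (1 - 2 * int i) * qlambda q (smult (q ^ (2 * i - 1)) (triangle_even q (Suc n) i))"
    using triangle_even_rec[of i n q] i by simp
  also have "\<dots> = q powi (1 - 2 * int i) * q ^ (2 * i - 1) * qlambda q (triangle_even q (Suc n) i)"
    by (simp only: qlambda_smult[OF q_nonzero] mult.assoc)
  also have "q powi (1 - 2 * int i) * q ^ (2 * i - 1) = 1"
  proof -
    have exponent: "1 - 2 * int i = - int (2 * i - 1)"
      using i by simp
    show ?thesis
      unfolding exponent power_int_minus power_int_of_nat using q_nonzero by simp
  qed
  finally show ?case by simp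
qed

lemma b_even_eq_qlambda:
  "1 \<le> k \<Longrightarrow> k \<le> n + 1 \<Longrightarrow> b (2 * n) k = qlambda q (triangle_even q n k)"
proof (induction n arbitrary: k)
  case 0
  have "triangle_even q 0 1 = 1"
    by (simp add: triangle_even_def)
  with 0 show ?case
    using b_0_1 qlambda_Upol_even[OF q_nonzero, of 0] by simp
next
  case (Suc n)
  then show ?case
    using b_even_row b_odd_row by simp
qed

lemma b_odd_diagonal:
  "b (2 * n + 1) (n + 1) = qlambda q (smult ((-1) ^ n) (Upol q 1 (2 * n + 1)))"
  using b_odd_row[OF b_even_eq_qlambda, of n "n + 1"] by (simp add: triangle_odd_def)

end

section \<open>q-derivative of formal power series\<close>

definition fps_qderiv :: "real \<Rightarrow> real fps \<Rightarrow> real fps" where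
  "fps_qderiv q f = Abs_fps (\<lambda>n. qint q (Suc n) * f $ Suc n)"

definition fps_dilate :: "real \<Rightarrow> real fps \<Rightarrow> real fps" where
  "fps_dilate q f = Abs_fps (\<lambda>n. q ^ n * f $ n)"

lemma fps_qderiv_add: "fps_qderiv q (f + g) = fps_qderiv q f + fps_qderiv q g"
  by (rule fps_ext) (simp add: fps_qderiv_def algebra_simps)

lemma fps_dilate_add: "fps_dilate q (f + g) = fps_dilate q f + fps_dilate q g"
  by (rule fps_ext) (simp add: fps_dilate_def algebra_simps)

lemma fps_dilate_mult: "fps_dilate q (f * g) = fps_dilate q f * fps_dilate q g"
proof (rule fps_ext)
  fix n
  have "fps_dilate q (f * g) $ n = (\<Sum>i=0..n. q ^ n * (f $ i * g $ (n - i)))"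
    by (simp add: fps_dilate_def fps_mult_nth sum_distrib_left)
  also have "\<dots> = (\<Sum>i=0..n. (q ^ i * f $ i) * (q ^ (n - i) * g $ (n - i)))"
    by (intro sum.cong) (simp_all flip: power_add)
  also have "\<dots> = (fps_dilate q f * fps_dilate q g) $ n"
    by (simp add: fps_dilate_def fps_mult_nth)
  finally show "fps_dilate q (f * g) $ n = (fps_dilate q f * fps_dilate q g) $ n" .
qed

lemma fps_dilate_eq: "fps_dilate q f = f + fps_const (q - 1) * fps_X * fps_qderiv q f"
proof (rule fps_ext)
  fix n
  have "(f + fps_const (q - 1) * fps_X * fps_qderiv q f) $ n = (1 + (q - 1) * qint q n) * f $ n"
    by (cases n) (simp_all add: fps_qderiv_def algebra_simps qint_def)
  also have "1 + (q - 1) * qint q n = q ^ n"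
    using qint_geometric[of q n] by simp
  finally show "fps_dilate q f $ n = (f + fps_const (q - 1) * fps_X * fps_qderiv q f) $ n"
    by (simp add: fps_dilate_def)
qed

lemma fps_qderiv_dilate: "fps_qderiv q (fps_dilate q f) = fps_const q * fps_dilate q (fps_qderiv q f)"
  by (rule fps_ext) (simp add: fps_dilate_def fps_qderiv_def algebra_simps)

text \<open>For q \<noteq> 1 this follows from multiplicativity of the dilation, since
  (q - 1) z D_q f = f(qz) - f(z).\<close>
lemma fps_qderiv_mult:
  "fps_qderiv q (f * g) = fps_dilate q f * fps_qderiv q g + fps_qderiv q f * g"
proof (cases "q = 1")
  case True
  have "fps_qderiv 1 h = fps_deriv h" "fps_dilate 1 h = h" for h
    by (simp_all add: fps_eq_iff fps_qderiv_def fps_dilate_def qint_def)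
  with True show ?thesis by simp
next
  case False
  define c where "c = fps_const (q - 1) * (fps_X :: real fps)"
  have "c \<noteq> 0"
    using False by (auto simp: c_def fps_eq_iff dest: spec[of _ 1])
  have dilate: "fps_dilate q h = h + c * fps_qderiv q h" for h
    using fps_dilate_eq[of q h] by (simp add: c_def)
  have "c * fps_qderiv q (f * g) = (f + c * fps_qderiv q f) * (g + c * fps_qderiv q g) - f * g"
    using dilate[of "f * g"] by (simp add: fps_dilate_mult dilate)
  also have "\<dots> = c * ((f + c * fps_qderiv q f) * fps_qderiv q g + fps_qderiv q f * g)"
    by (simp add: algebra_simps)
  finally show ?thesis
    using \<open>c \<noteq> 0\<close> by (simp add: dilate)
qed

lemma fps_qderiv_qexp:
  assumes "q \<noteq> -1"
  shows "fps_qderiv q (qexp q) = qexp q"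
  using qint_nonzero[OF assms] qfact_nonzero[OF assms]
  by (intro fps_ext) (simp add: fps_qderiv_def qexp_def qfact_Suc field_simps)

section \<open>Moments of lambda and the q-Genocchi numbers\<close>

definition Ushift_qegf :: "real \<Rightarrow> real \<Rightarrow> real fps" where
  "Ushift_qegf q s = Abs_fps (\<lambda>n. (-1) ^ n * poly (Ushift q n) s / qfact q n)"

lemma poly_Ushift_rec:
  "poly (Ushift q (Suc (Suc n))) s =
     (1 + q ^ Suc n) * poly (Ushift q (Suc n)) s + q ^ n * s * poly (Ushift q n) s"
  by (subst Ushift_rec) (simp add: algebra_simps del: Ushift_Suc)

lemma fps_qderiv_Ushift_qegf:
  fixes s :: real
  assumes q_ne: "q \<noteq> -1"
  defines "A \<equiv> Ushift_qegf q s"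
  shows "fps_qderiv q (fps_qderiv q A) =
    - fps_qderiv q A - fps_const q * fps_dilate q (fps_qderiv q A) + fps_const s * fps_dilate q A"
proof (rule fps_ext)
  fix n
  define u0 u1 u2 where "u0 = poly (Ushift q n) s" and "u1 = poly (Ushift q (Suc n)) s"
    and "u2 = poly (Ushift q (Suc (Suc n))) s"
  define F a b where "F = qfact q n" and "a = qint q (Suc n)" and "b = qint q (Suc (Suc n))"
  have nonzero: "F \<noteq> 0" "a \<noteq> 0" "b \<noteq> 0"
    unfolding F_def a_def b_def using qfact_nonzero[OF q_ne] qint_nonzero[OF q_ne] by auto
  have lhs: "fps_qderiv q (fps_qderiv q A) $ n = a * (b * ((-1) ^ n * u2 / (F * a * b)))"
    by (simp add: A_def fps_qderiv_def Ushift_qegf_def u2_def F_def a_def b_def qfact_Suc del: Ushift_Suc)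
  have rhs: "(- fps_qderiv q A - fps_const q * fps_dilate q (fps_qderiv q A)
      + fps_const s * fps_dilate q A) $ n =
    - (a * ((-1) ^ Suc n * u1 / (F * a))) - q * (q ^ n * (a * ((-1) ^ Suc n * u1 / (F * a))))
      + s * (q ^ n * ((-1) ^ n * u0 / F))"
    by (simp add: A_def fps_qderiv_def fps_dilate_def Ushift_qegf_def u0_def u1_def F_def a_def
        qfact_Suc del: Ushift_Suc)
  have recurrence: "u2 = (1 + q ^ Suc n) * u1 + q ^ n * s * u0"
    unfolding u0_def u1_def u2_def by (rule poly_Ushift_rec)
  show "fps_qderiv q (fps_qderiv q A) $ n = (- fps_qderiv q A
      - fps_const q * fps_dilate q (fps_qderiv q A) + fps_const s * fps_dilate q A) $ n"
    unfolding lhs rhs recurrence using nonzero by (simp add: field_simps)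
qed

text \<open>Multiplying by e(z) removes the first-order terms: G = A e(z) satisfies D_q^2 G = G + s G(qz),
  which only links coefficients of equal parity.\<close>
lemma fps_qderiv_Ushift_qegf_qexp:
  fixes s :: real
  assumes q_ne: "q \<noteq> -1"
  defines "G \<equiv> Ushift_qegf q s * qexp q"
  shows "fps_qderiv q (fps_qderiv q G) = G + fps_const s * fps_dilate q G"
proof -
  define A e c Q S where "A = Ushift_qegf q s" and "e = qexp q"
    and "c = fps_const (q - 1) * (fps_X :: real fps)" and "Q = fps_const q" and "S = fps_const s"
  have De: "fps_qderiv q e = e"
    unfolding e_def by (rule fps_qderiv_qexp[OF q_ne])
  have dilate: "fps_dilate q h = h + c * fps_qderiv q h" for h
    using fps_dilate_eq[of q h] by (simp add: c_def)
  have first: "fps_qderiv q (A * e) = (fps_dilate q A + fps_qderiv q A) * e"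
    unfolding fps_qderiv_mult De by (simp add: algebra_simps)
  have "fps_qderiv q (fps_qderiv q (A * e)) =
      (fps_dilate q (fps_dilate q A) + fps_dilate q (fps_qderiv q A)
       + Q * fps_dilate q (fps_qderiv q A) + fps_qderiv q (fps_qderiv q A)) * e"
    unfolding first fps_qderiv_mult[of q "fps_dilate q A + fps_qderiv q A" e] De fps_dilate_add
      fps_qderiv_add fps_qderiv_dilate Q_def
    by (simp add: algebra_simps)
  also have "fps_dilate q (fps_dilate q A) + fps_dilate q (fps_qderiv q A)
       + Q * fps_dilate q (fps_qderiv q A) + fps_qderiv q (fps_qderiv q A)
     = A + S * fps_dilate q A + S * c * fps_dilate q A"
  proof -
    have "fps_dilate q (fps_dilate q A) = fps_dilate q A + c * (Q * fps_dilate q (fps_qderiv q A))"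
      using dilate[of "fps_dilate q A"] fps_qderiv_dilate[of q A] by (simp add: Q_def)
    moreover have "fps_dilate q A = A + c * fps_qderiv q A"
      by (rule dilate)
    moreover have "fps_dilate q (fps_qderiv q A) = fps_qderiv q A + c * fps_qderiv q (fps_qderiv q A)"
      by (rule dilate)
    moreover have "fps_qderiv q (fps_qderiv q A) =
        - fps_qderiv q A - Q * fps_dilate q (fps_qderiv q A) + S * fps_dilate q A"
      unfolding A_def Q_def S_def by (rule fps_qderiv_Ushift_qegf[OF q_ne])
    ultimately show ?thesis
      by algebra
  qed
  also have "(A + S * fps_dilate q A + S * c * fps_dilate q A) * e = A * e + S * fps_dilate q (A * e)"
    using dilate[of e] De by (simp add: fps_dilate_mult algebra_simps)
  finally show ?thesis
    by (simp add: G_def A_def e_def S_def)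
qed

lemma Ushift_qegf_qexp_even_coeff:
  assumes "q \<noteq> -1"
  shows "(Ushift_qegf q s * qexp q) $ (2 * m) = 0"
proof (induction m)
  case 0
  show ?case
    by (simp add: Ushift_qegf_def qexp_def)
next
  case (Suc m)
  define G where "G = Ushift_qegf q s * qexp q"
  have "fps_qderiv q (fps_qderiv q G) $ (2 * m) = (G + fps_const s * fps_dilate q G) $ (2 * m)"
    unfolding G_def using fps_qderiv_Ushift_qegf_qexp[OF assms] by simp
  then have "qint q (Suc (2 * m)) * (qint q (Suc (Suc (2 * m))) * G $ Suc (Suc (2 * m))) = 0"
    using Suc by (simp add: fps_qderiv_def fps_dilate_def G_def)
  then show ?case
    using qint_nonzero[OF assms] by (simp add: G_def)
qed

lemma Ushift_qbinomial_sum_even: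
  assumes "q \<noteq> -1"
  shows "(\<Sum>i\<le>2 * m. smult ((-1) ^ i / (qfact q i * qfact q (2 * m - i))) (Ushift q i)) = 0"
proof (rule poly_ext)
  fix s
  have "poly (\<Sum>i\<le>2 * m. smult ((-1) ^ i / (qfact q i * qfact q (2 * m - i))) (Ushift q i)) s
      = (Ushift_qegf q s * qexp q) $ (2 * m)"
    by (simp add: poly_sum fps_mult_nth Ushift_qegf_def qexp_def atLeast0AtMost del: Ushift_Suc)
  then show "poly (\<Sum>i\<le>2 * m. smult ((-1) ^ i / (qfact q i * qfact q (2 * m - i))) (Ushift q i)) s
      = poly 0 s"
    using Ushift_qegf_qexp_even_coeff[OF assms] by simp
qed

lemma qlambda_Ushift_moment_identity:
  assumes "q \<noteq> 0" "q \<noteq> -1" "1 \<le> m"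
  shows "(\<Sum>k=1..m. qlambda q (Ushift q (2 * k)) / qfact q (2 * k) / qfact q (2 * m - 2 * k))
    = 1 / qfact q (2 * m - 1)"
proof -
  define h where "h i = (-1) ^ i / (qfact q i * qfact q (2 * m - i)) * qlambda q (Ushift q i)" for i
  have "0 = (\<Sum>i\<le>2 * m. h i)"
    using arg_cong[OF Ushift_qbinomial_sum_even[OF assms(2)], of "qlambda q"]
    by (simp add: h_def qlambda_sum qlambda_smult qlambda_0 assms(1))
  also have "\<dots> = (\<Sum>k<Suc m. h (2 * k)) + (\<Sum>k<m. h (2 * k + 1))"
    using sum_split_even_odd[where f = h and g = h and n = m] by (simp add: lessThan_Suc_atMost[symmetric])
  also have "(\<Sum>k<Suc m. h (2 * k)) = (\<Sum>k=1..m. h (2 * k))"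
    by (simp add: sum.atLeast1_atMost_eq sum.lessThan_Suc_shift h_def qlambda_0 assms(1)
        del: sum.lessThan_Suc)
  also have "(\<Sum>k<m. h (2 * k + 1)) = (\<Sum>k<m. if k = 0 then - 1 / qfact q (2 * m - 1) else 0)"
    by (intro sum.cong) (simp_all add: h_def qlambda_Upol_even assms(1) qfact_def qint_def)
  also have "\<dots> = - 1 / qfact q (2 * m - 1)"
    using assms(3) by simp
  finally show ?thesis
    by (simp add: h_def)
qed

definition qtanh :: "real \<Rightarrow> real fps" where
  "qtanh q = (qexp q - qexp_neg q) * inverse (qexp q + qexp_neg q)"

lemma qtanh_moment_identity:
  assumes "1 \<le> m"
  shows "(\<Sum>k=1..m. qtanh q $ (2 * k - 1) / qfact q (2 * m - 2 * k)) = 1 / qfact q (2 * m - 1)"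
proof -
  define E where "E = qexp q + qexp_neg q"
  define g where "g i = qtanh q $ i * E $ (2 * m - 1 - i)" for i
  have E_nth: "E $ j = (1 + (-1) ^ j) / qfact q j" for j
    by (simp add: E_def qexp_def qexp_neg_def add_divide_distrib)
  have "qtanh q * E = qexp q - qexp_neg q"
    using E_nth[of 0] by (simp add: qtanh_def E_def inverse_mult_eq_1 mult.assoc)
  then have "2 / qfact q (2 * m - 1) = (qtanh q * E) $ (2 * m - 1)"
    using assms by (simp add: qexp_def qexp_neg_def diff_divide_distrib)
  also have "\<dots> = (\<Sum>i<2 * m. g i)"
    using assms by (simp add: fps_mult_nth g_def atLeast0AtMost lessThan_Suc_atMost[symmetric])
  also have "\<dots> = (\<Sum>k<m. g (2 * k)) + (\<Sum>k<m. g (2 * k + 1))"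
    using sum_split_even_odd[where f = g and g = g and n = m] by simp
  also have "(\<Sum>k<m. g (2 * k)) = 0"
  proof (intro sum.neutral ballI)
    fix k assume "k \<in> {..<m}"
    then have "odd (2 * m - 1 - 2 * k)"
      by (auto simp: odd_iff_mod_2_eq_one)
    then show "g (2 * k) = 0"
      by (simp add: g_def E_nth)
  qed
  also have "(\<Sum>k<m. g (2 * k + 1)) = 2 * (\<Sum>k=1..m. qtanh q $ (2 * k - 1) / qfact q (2 * m - 2 * k))"
    by (simp add: sum.atLeast1_atMost_eq sum_distrib_left g_def E_nth ac_simps)
  finally show ?thesis
    by simp
qed

lemma unitriangular_system_unique:
  fixes x y r :: "nat \<Rightarrow> 'a::comm_ring_1" and w :: "nat \<Rightarrow> nat \<Rightarrow> 'a"
  assumes x: "\<And>m. 1 \<le> m \<Longrightarrow> (\<Sum>k=1..m. x k * w m k) = r m"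
    and y: "\<And>m. 1 \<le> m \<Longrightarrow> (\<Sum>k=1..m. y k * w m k) = r m"
    and diagonal: "\<And>m. w m m = 1"
  shows "1 \<le> m \<Longrightarrow> x m = y m"
proof (induction m rule: less_induct)
  case (less m)
  then obtain n where m: "m = Suc n"
    by (cases m) auto
  have "(\<Sum>k=1..n. x k * w m k) = (\<Sum>k=1..n. y k * w m k)"
    using less m by (intro sum.cong) auto
  moreover have "(\<Sum>k=1..n. x k * w m k) + x m * w m m = (\<Sum>k=1..n. y k * w m k) + y m * w m m"
    using x[of m] y[of m] m by simp
  ultimately show ?case
    using diagonal by simp
qed

lemma qlambda_Ushift_even_eq_qtanh:
  assumes "q \<noteq> 0" "q \<noteq> -1" "1 \<le> n"
  shows "qlambda q (Ushift q (2 * n)) / qfact q (2 * n) = qtanh q $ (2 * n - 1)"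
proof (rule unitriangular_system_unique[where x = "\<lambda>k. qlambda q (Ushift q (2 * k)) / qfact q (2 * k)"
      and y = "\<lambda>k. qtanh q $ (2 * k - 1)" and w = "\<lambda>m k. 1 / qfact q (2 * m - 2 * k)"
      and r = "\<lambda>m. 1 / qfact q (2 * m - 1)"])
  show "(\<Sum>k=1..m. qlambda q (Ushift q (2 * k)) / qfact q (2 * k) * (1 / qfact q (2 * m - 2 * k)))
      = 1 / qfact q (2 * m - 1)" if "1 \<le> m" for m
    using qlambda_Ushift_moment_identity[OF assms(1,2) that] by simp
  show "(\<Sum>k=1..m. qtanh q $ (2 * k - 1) * (1 / qfact q (2 * m - 2 * k))) = 1 / qfact q (2 * m - 1)"
    if "1 \<le> m" for m
    using qtanh_moment_identity[OF that] by simp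
qed (use assms(3) in simp_all)

lemma qlambda_Upol_odd_eq_qGenocchi:
  assumes "q \<noteq> 0" "q \<noteq> -1" "1 \<le> n"
  shows "qlambda q (smult ((-1) ^ (n - 1)) (Upol q 1 (2 * n - 1)))
    = qpoch_neg q (2 * n - 1) * qGenocchi q n"
proof -
  have "Upol q 1 (2 * n - 1) = Ushift q (2 * n)"
    using assms(3) by (cases n) simp_all
  then have "qlambda q (smult ((-1) ^ (n - 1)) (Upol q 1 (2 * n - 1)))
      = (-1) ^ (n - 1) * qfact q (2 * n) * qtanh q $ (2 * n - 1)"
    using qlambda_Ushift_even_eq_qtanh[OF assms] qfact_nonzero[OF assms(2), of "2 * n"]
    by (simp add: qlambda_smult assms(1) field_simps del: Upol.simps Ushift_Suc)
  also have "qtanh q $ (2 * n - 1) = (fps_X * (qexp q - qexp_neg q) * inverse (qexp q + qexp_neg q)) $ (2 * n)"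
    using assms(3) by (simp add: qtanh_def mult.assoc)
  finally show ?thesis
    using qpoch_neg_nonzero[OF assms(2), of "2 * n - 1"] by (simp add: qGenocchi_def)
qed

theorem theorem3p6:
  fixes q :: real and b :: "nat \<Rightarrow> nat \<Rightarrow> real"
  assumes hq0: "q \<noteq> 0" and hq1: "q \<noteq> -1"
    and b01: "b 0 1 = 1"
    and bodd0: "\<forall>n. b (2 * n + 1) 0 = 0"
    and beven_top: "\<forall>n\<ge>1. b (2 * n) (n + 1) = 0"
    and bodd: "\<forall>n k. 1 \<le> k \<and> k \<le> n + 1 \<longrightarrow>
        b (2 * n + 1) k = q ^ (2 * k - 2) * b (2 * n + 1) (k - 1) + (1 + q ^ (2 * k - 1)) * b (2 * n) k"
    and beven: "\<forall>n k. n \<ge> 1 \<and> 1 \<le> k \<and> k \<le> n \<longrightarrow>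
        b (2 * n) k = q powi (1 - 2 * int k) * (b (2 * n) (k + 1) + (1 + q ^ (2 * k)) * b (2 * n - 1) k)"
  shows "\<forall>n\<ge>1. b (2 * n - 1) n = qlambda q (smult ((-1) ^ (n - 1)) (Upol q 1 (2 * n - 1)))
                 \<and> qlambda q (smult ((-1) ^ (n - 1)) (Upol q 1 (2 * n - 1))) = qpoch_neg q (2 * n - 1) * qGenocchi q n"
proof -
  interpret q_genocchi_triangle q b
    using assms by unfold_locales blast+
  show ?thesis
  proof (intro allI impI conjI)
    fix n :: nat
    assume "1 \<le> n"
    then obtain m where "n = Suc m"
      by (cases n) auto
    then show "b (2 * n - 1) n = qlambda q (smult ((-1) ^ (n - 1)) (Upol q 1 (2 * n - 1)))"
      using b_odd_diagonal[of m] by simp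
    show "qlambda q (smult ((-1) ^ (n - 1)) (Upol q 1 (2 * n - 1))) = qpoch_neg q (2 * n - 1) * qGenocchi q n"
      using hq0 hq1 \<open>1 \<le> n\<close> by (rule qlambda_Upol_odd_eq_qGenocchi)
  qed
qed

end
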